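(* Let $G_1$ and $G_2$ be finite simple undirected graphs. Then $G_1\cong G_2$ if and only if $\sigma(G_1)=\sigma(G_2)$.
   Context: A clique is a set of pairwise adjacent vertices; a set $S$ of cliques of $G$ is a total clique covering if every vertex lies in some member of $S$ and every edge has both endpoints in some member of $S$; $\theta_t(G)$ is the minimum size of a total clique covering. The code $\sigma(G)$ of a graph $G=(V,E)$ with $|V|=m$ and $s\ge0$ isolated vertices is defined as follows. Let $k=\theta_t(G)-s$. For a total clique covering $S=\{C_1,\ldots,C_{s+k}\}$ with $|S|=\theta_t(G)$, where $C_1,\ldots,C_s$ are the singleton cliques of the isolated vertices, and for each bijective assignment of the first $k$ primes to the cliques $C_{s+1},\ldots,C_{s+k}$, label each vertex $v$ by $1$ if $v$ is isolated and otherwise by the product of the primes assigned to the cliques among $C_{s+1},\ldots,C_{s+k}$ that contain $v$; listing these labels in non-decreasing order gives a sequence in $\mathbb{Z}^m$ (a coding sequence). Let $\sigma[S]$ be the lexicographically least of the (at most $k!$) sequences so obtained. Then $\sigma(G)$ is the lexicographically least element of $\{\sigma[S] : S \text{ a total clique covering of } G \text{ with } |S|=\theta_t(G)\}$. *)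

theory Defs
  imports Main "HOL-Library.Multiset" "HOL-Library.List_Lexorder" "HOL-Computational_Algebra.Primes"
begin

definition simple_graph :: "'a set \<Rightarrow> ('a \<times> 'a) set \<Rightarrow> bool" where
  "simple_graph V E \<longleftrightarrow> finite V \<and> E \<subseteq> V \<times> V \<and> sym E \<and> irrefl E"

definition graph_iso :: "'a set \<Rightarrow> ('a \<times> 'a) set \<Rightarrow> 'b set \<Rightarrow> ('b \<times> 'b) set \<Rightarrow> bool" where
  "graph_iso V1 E1 V2 E2 \<longleftrightarrow> (\<exists>f. bij_betw f V1 V2 \<and>
      (\<forall>x\<in>V1. \<forall>y\<in>V1. (x, y) \<in> E1 \<longleftrightarrow> (f x, f y) \<in> E2))"

definition is_clique :: "'a set \<Rightarrow> ('a \<times> 'a) set \<Rightarrow> 'a set \<Rightarrow> bool" where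
  "is_clique V E C \<longleftrightarrow> C \<subseteq> V \<and> (\<forall>x\<in>C. \<forall>y\<in>C. x \<noteq> y \<longrightarrow> (x, y) \<in> E)"

definition total_clique_covering :: "'a set \<Rightarrow> ('a \<times> 'a) set \<Rightarrow> 'a set set \<Rightarrow> bool" where
  "total_clique_covering V E S \<longleftrightarrow> (\<forall>C\<in>S. is_clique V E C)
     \<and> (\<forall>v\<in>V. \<exists>C\<in>S. v \<in> C)
     \<and> (\<forall>(x, y)\<in>E. \<exists>C\<in>S. x \<in> C \<and> y \<in> C)"

definition theta_t :: "'a set \<Rightarrow> ('a \<times> 'a) set \<Rightarrow> nat" where
  "theta_t V E = (LEAST n. \<exists>S. total_clique_covering V E S \<and> finite S \<and> card S = n)"

definition isolated :: "'a set \<Rightarrow> ('a \<times> 'a) set \<Rightarrow> 'a \<Rightarrow> bool" where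
  "isolated V E v \<longleftrightarrow> v \<in> V \<and> (\<forall>u. (v, u) \<notin> E)"

definition isolated_vertices :: "'a set \<Rightarrow> ('a \<times> 'a) set \<Rightarrow> 'a set" where
  "isolated_vertices V E = {v. isolated V E v}"

definition first_primes :: "nat \<Rightarrow> nat set" where
  "first_primes k = {p. prime p \<and> card {q. prime q \<and> q < p} < k}"

definition coding_sequence :: "'a set \<Rightarrow> ('a \<times> 'a) set \<Rightarrow> 'a set set \<Rightarrow> ('a set \<Rightarrow> nat) \<Rightarrow> nat list" where
  "coding_sequence V E S p =
     sorted_list_of_multiset
       (image_mset (\<lambda>v. if isolated V E v then 1
                        else (\<Prod>C\<in>{C \<in> S - (\<lambda>u. {u}) ` isolated_vertices V E. v \<in> C}. p C))
                   (mset_set V))"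

definition sigma_cover :: "'a set \<Rightarrow> ('a \<times> 'a) set \<Rightarrow> 'a set set \<Rightarrow> nat list" where
  "sigma_cover V E S =
     (let k = theta_t V E - card (isolated_vertices V E) in
      Min {coding_sequence V E S p | p.
             bij_betw p (S - (\<lambda>u. {u}) ` isolated_vertices V E) (first_primes k)})"

text \<open>The code sigma(G); lists compared lexicographically (List_Lexorder).\<close>
definition sigma_code :: "'a set \<Rightarrow> ('a \<times> 'a) set \<Rightarrow> nat list" where
  "sigma_code V E = Min {sigma_cover V E S | S.
      total_clique_covering V E S \<and> finite S \<and> card S = theta_t V E}"

end

theory Submission
  imports Defs "HOL-Library.Infinite_Set" "HOL-Library.FuncSet"
begin

(* The label of a non-isolated vertex is the product of the distinct primes attached to the
   non-singleton cliques containing it, so two distinct vertices are adjacent exactly when their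
   labels have a common prime factor. Equal codes therefore give a label-preserving bijection
   between the vertex sets, which is an isomorphism. Conversely, an isomorphism transports every
   minimum total clique covering together with its prime assignment to one of the other graph
   with the same coding sequence, so each code is bounded by the other. *)

lemma card_primes_less_enumerate:
  "card {q. prime q \<and> q < enumerate {p::nat. prime p} n} = n"
proof -
  let ?e = "enumerate {p::nat. prime p}"
  have "{q. prime q \<and> q < ?e n} = ?e ` {..<n}"
  proof (intro equalityI subsetI)
    fix q assume "q \<in> {q. prime q \<and> q < ?e n}"
    moreover obtain m where "q = ?e m"
      using \<open>q \<in> _\<close> range_enumerate[OF primes_infinite] by (metis (mono_tags) CollectD CollectI rangeE)
    ultimately show "q \<in> ?e ` {..<n}"
      using primes_infinite by auto
  qed (use primes_infinite enumerate_in_set in auto)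
  then show ?thesis
    using inj_enumerate[OF primes_infinite] by (simp add: card_image inj_on_subset)
qed

lemma first_primes_eq_enumerate: "first_primes k = enumerate {p. prime p} ` {..<k}"
proof -
  have "p \<in> first_primes k \<longleftrightarrow> p \<in> enumerate {p. prime p} ` {..<k}" for p
  proof
    assume "p \<in> first_primes k"
    then obtain m where "p = enumerate {p. prime p} m" "card {q. prime q \<and> q < p} < k"
      using range_enumerate[OF primes_infinite] unfolding first_primes_def by (metis (mono_tags) CollectD CollectI rangeE)
    then show "p \<in> enumerate {p. prime p} ` {..<k}"
      by (auto simp: card_primes_less_enumerate)
  qed (auto simp: first_primes_def card_primes_less_enumerate enumerate_in_set[OF primes_infinite, simplified])
  then show ?thesis by blast
qed

lemma finite_first_primes: "finite (first_primes k)"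
  by (simp add: first_primes_eq_enumerate)

lemma card_first_primes: "card (first_primes k) = k"
  using inj_enumerate[OF primes_infinite]
  by (simp add: first_primes_eq_enumerate card_image inj_on_subset)

lemma prime_of_first_primes: "p \<in> first_primes k \<Longrightarrow> prime p"
  unfolding first_primes_def by simp

lemma not_coprime_iff_common_prime_dvd:
  "\<not> coprime a b \<longleftrightarrow> (\<exists>q. prime q \<and> q dvd a \<and> q dvd b)" for a b :: nat
proof
  assume "\<not> coprime a b"
  then obtain q where "prime q" "q dvd gcd a b"
    using prime_factor_nat[of "gcd a b"] by (auto simp: coprime_iff_gcd_eq_1)
  then show "\<exists>q. prime q \<and> q dvd a \<and> q dvd b" by auto
qed (auto simp: coprime_def not_prime_unit)

lemma bij_betw_of_image_mset_eq:
  assumes "finite A" "finite B" "image_mset f (mset_set A) = image_mset g (mset_set B)"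
  shows "\<exists>h. bij_betw h A B \<and> (\<forall>x\<in>A. g (h x) = f x)"
  using assms
proof (induction A arbitrary: B rule: finite_induct)
  case empty
  then show ?case by (auto simp: mset_set_empty_iff bij_betw_def)
next
  case (insert a A)
  have "f a \<in># image_mset f (mset_set (insert a A))"
    using insert.hyps(1) by simp
  then have "f a \<in># image_mset g (mset_set B)"
    using insert.prems(2) by simp
  then obtain b where b: "b \<in> B" "g b = f a"
    using insert.prems(1) by auto
  have "mset_set B = add_mset b (mset_set (B - {b}))"
    using insert.prems(1) b(1) by (metis finite_Diff insert_Diff mset_set.insert Diff_iff singletonI)
  then have "add_mset (f a) (image_mset f (mset_set A)) = add_mset (g b) (image_mset g (mset_set (B - {b})))"
    using insert b by simp
  then obtain h where h: "bij_betw h A (B - {b})" "\<forall>x\<in>A. g (h x) = f x"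
    using insert.IH[of "B - {b}"] insert.prems(1) b(2) by auto
  have "bij_betw (h(a := b)) A (B - {b})"
    using h(1) insert.hyps(2) by (metis (no_types) bij_betw_cong fun_upd_other)
  then have "bij_betw (h(a := b)) (A \<union> {a}) (B - {b} \<union> {b})"
    using notIn_Un_bij_betw[of a A "h(a := b)" "B - {b}"] insert.hyps(2) by simp
  moreover have "B - {b} \<union> {b} = B"
    using b(1) by blast
  ultimately have "bij_betw (h(a := b)) (insert a A) B"
    by simp
  then show ?case using h b by auto
qed

abbreviation isolated_singletons :: "'a set \<Rightarrow> ('a \<times> 'a) set \<Rightarrow> 'a set set" where
  "isolated_singletons V E \<equiv> (\<lambda>u. {u}) ` isolated_vertices V E"

definition vertex_label :: "'a set \<Rightarrow> ('a \<times> 'a) set \<Rightarrow> 'a set set \<Rightarrow> ('a set \<Rightarrow> nat) \<Rightarrow> 'a \<Rightarrow> nat" where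
  "vertex_label V E S p v =
     (if isolated V E v then 1 else (\<Prod>C\<in>{C \<in> S - isolated_singletons V E. v \<in> C}. p C))"

lemma coding_sequence_eq:
  "coding_sequence V E S p = sorted_list_of_multiset (image_mset (vertex_label V E S p) (mset_set V))"
  unfolding coding_sequence_def vertex_label_def by simp

lemma total_clique_coveringD:
  assumes "total_clique_covering V E S"
  shows "C \<in> S \<Longrightarrow> is_clique V E C"
    and "v \<in> V \<Longrightarrow> \<exists>C\<in>S. v \<in> C"
    and "(x, y) \<in> E \<Longrightarrow> \<exists>C\<in>S. x \<in> C \<and> y \<in> C"
  using assms unfolding total_clique_covering_def by auto

lemma total_clique_covering_subset_Pow: "total_clique_covering V E S \<Longrightarrow> S \<subseteq> Pow V"
  unfolding total_clique_covering_def is_clique_def by auto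

lemma finite_total_clique_coverings:
  "finite V \<Longrightarrow> finite {S. total_clique_covering V E S \<and> P S}"
  by (rule finite_subset[of _ "Pow (Pow V)"]) (auto dest: total_clique_covering_subset_Pow)

lemma total_clique_covering_exists:
  assumes "finite V" "E \<subseteq> V \<times> V" "sym E"
  shows "\<exists>S. total_clique_covering V E S \<and> finite S"
proof -
  let ?S = "(\<lambda>v. {v}) ` V \<union> (\<lambda>(x, y). {x, y}) ` E"
  have "is_clique V E C" if "C \<in> ?S" for C
    using that assms(2,3) by (auto simp: is_clique_def dest: symD)
  then have "total_clique_covering V E ?S"
    unfolding total_clique_covering_def by blast
  moreover have "finite E"
    using assms(1,2) finite_subset by blast
  then have "finite ?S"
    using assms(1) by simp
  ultimately show ?thesis by blast
qed

lemma minimum_total_clique_covering_exists: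
  assumes "simple_graph V E"
  shows "\<exists>S. total_clique_covering V E S \<and> finite S \<and> card S = theta_t V E"
proof -
  have "\<exists>n S. total_clique_covering V E S \<and> finite S \<and> card S = n"
    using total_clique_covering_exists assms unfolding simple_graph_def by blast
  then show ?thesis
    unfolding theta_t_def by (rule LeastI_ex)
qed

lemma theta_t_le_card:
  "total_clique_covering V E S \<Longrightarrow> finite S \<Longrightarrow> theta_t V E \<le> card S"
  unfolding theta_t_def by (rule Least_le) blast

lemma isolated_singletons_subset:
  assumes "total_clique_covering V E S"
  shows "isolated_singletons V E \<subseteq> S"
proof
  fix X assume "X \<in> isolated_singletons V E"
  then obtain v where X: "X = {v}" and v: "isolated V E v"
    unfolding isolated_vertices_def by auto
  obtain C where C: "C \<in> S" "v \<in> C"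
    using total_clique_coveringD(2)[OF assms] v unfolding isolated_def by blast
  have "w = v" if "w \<in> C" for w
  proof (rule ccontr)
    assume "w \<noteq> v"
    then have "(v, w) \<in> E"
      using total_clique_coveringD(1)[OF assms C(1)] C(2) that by (simp add: is_clique_def)
    then show False
      using v unfolding isolated_def by blast
  qed
  then have "C = X"
    using C(2) X by blast
  then show "X \<in> S"
    using C(1) by simp
qed

lemma card_Diff_isolated_singletons:
  assumes "total_clique_covering V E S" "finite V"
  shows "card (S - isolated_singletons V E) = card S - card (isolated_vertices V E)"
proof -
  have "finite (isolated_vertices V E)"
    using assms(2) by (rule finite_subset[rotated]) (auto simp: isolated_vertices_def isolated_def)
  then have "card (S - isolated_singletons V E) = card S - card (isolated_singletons V E)"
    using card_Diff_subset isolated_singletons_subset[OF assms(1)] by blast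
  also have "card (isolated_singletons V E) = card (isolated_vertices V E)"
    by (rule card_image) (auto simp: inj_on_def)
  finally show ?thesis .
qed

lemma edge_iff_common_clique:
  assumes "irrefl E" "total_clique_covering V E S"
  shows "(u, v) \<in> E \<longleftrightarrow> u \<noteq> v \<and> (\<exists>C\<in>S - isolated_singletons V E. u \<in> C \<and> v \<in> C)"
proof
  assume uv: "(u, v) \<in> E"
  then have "u \<noteq> v"
    using assms(1) irrefl_def by fastforce
  moreover obtain C where "C \<in> S" "u \<in> C" "v \<in> C"
    using total_clique_coveringD(3)[OF assms(2) uv] by blast
  moreover from calculation have "C \<notin> isolated_singletons V E"
    by auto
  ultimately show "u \<noteq> v \<and> (\<exists>C\<in>S - isolated_singletons V E. u \<in> C \<and> v \<in> C)"
    by blast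
next
  assume "u \<noteq> v \<and> (\<exists>C\<in>S - isolated_singletons V E. u \<in> C \<and> v \<in> C)"
  then obtain C where "u \<noteq> v" "C \<in> S" "u \<in> C" "v \<in> C"
    by blast
  then show "(u, v) \<in> E"
    using total_clique_coveringD(1)[OF assms(2)] by (simp add: is_clique_def)
qed

lemma prime_dvd_vertex_label_iff:
  assumes "finite S" "\<And>C. C \<in> S - isolated_singletons V E \<Longrightarrow> prime (p C)"
    and "prime q" "\<not> isolated V E v"
  shows "q dvd vertex_label V E S p v \<longleftrightarrow> (\<exists>C\<in>S - isolated_singletons V E. v \<in> C \<and> q = p C)"
proof -
  have "q dvd vertex_label V E S p v \<longleftrightarrow> (\<exists>C\<in>{C \<in> S - isolated_singletons V E. v \<in> C}. q dvd p C)"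
    unfolding vertex_label_def using assms(1,3,4) by (simp add: prime_dvd_prod_iff)
  moreover have "q dvd p C \<longleftrightarrow> q = p C" if "C \<in> S - isolated_singletons V E" for C
    using assms(2)[OF that] assms(3) primes_dvd_imp_eq by auto
  ultimately show ?thesis
    by auto
qed

(* Injectivity of p is what turns a common prime factor of two labels into a common clique. *)
lemma edge_iff_not_coprime_vertex_labels:
  assumes "sym E" "irrefl E" "total_clique_covering V E S" "finite S"
    and "inj_on p (S - isolated_singletons V E)"
    and "\<And>C. C \<in> S - isolated_singletons V E \<Longrightarrow> prime (p C)"
  shows "(u, v) \<in> E \<longleftrightarrow> u \<noteq> v \<and> \<not> coprime (vertex_label V E S p u) (vertex_label V E S p v)"
proof (cases "isolated V E u \<or> isolated V E v")
  case True
  then have "(u, v) \<notin> E"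
    using assms(1) unfolding isolated_def sym_def by blast
  moreover have "coprime (vertex_label V E S p u) (vertex_label V E S p v)"
    using True unfolding vertex_label_def by auto
  ultimately show ?thesis by blast
next
  case False
  let ?S' = "S - isolated_singletons V E"
  have dvd_label: "q dvd vertex_label V E S p w \<longleftrightarrow> (\<exists>C\<in>?S'. w \<in> C \<and> q = p C)"
    if "prime q" "w \<in> {u, v}" for q w
    using prime_dvd_vertex_label_iff[of S V E p q w] assms(4,6) that False by blast
  have "\<not> coprime (vertex_label V E S p u) (vertex_label V E S p v) \<longleftrightarrow> (\<exists>C\<in>?S'. u \<in> C \<and> v \<in> C)"
  proof
    assume "\<not> coprime (vertex_label V E S p u) (vertex_label V E S p v)"
    then obtain q where q: "prime q" "q dvd vertex_label V E S p u" "q dvd vertex_label V E S p v"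
      unfolding not_coprime_iff_common_prime_dvd by blast
    then obtain C D where "C \<in> ?S'" "u \<in> C" "q = p C" "D \<in> ?S'" "v \<in> D" "q = p D"
      using dvd_label[OF q(1)] False by auto
    then show "\<exists>C\<in>?S'. u \<in> C \<and> v \<in> C"
      using inj_onD[OF assms(5)] by metis
  next
    assume "\<exists>C\<in>?S'. u \<in> C \<and> v \<in> C"
    then obtain C where "C \<in> ?S'" "u \<in> C" "v \<in> C"
      by blast
    then have "p C dvd vertex_label V E S p u" "p C dvd vertex_label V E S p v"
      using dvd_label[OF assms(6)] by auto
    then show "\<not> coprime (vertex_label V E S p u) (vertex_label V E S p v)"
      unfolding not_coprime_iff_common_prime_dvd using assms(6) \<open>C \<in> ?S'\<close> by blast
  qed
  then show ?thesis
    using edge_iff_common_clique[OF assms(2,3)] by simp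
qed

definition coding_candidate :: "'a set \<Rightarrow> ('a \<times> 'a) set \<Rightarrow> 'a set set \<Rightarrow> ('a set \<Rightarrow> nat) \<Rightarrow> bool" where
  "coding_candidate V E S p \<longleftrightarrow>
     total_clique_covering V E S \<and> finite S \<and> card S = theta_t V E \<and>
     bij_betw p (S - isolated_singletons V E) (first_primes (theta_t V E - card (isolated_vertices V E)))"

lemma coding_candidate_prime:
  "coding_candidate V E S p \<Longrightarrow> C \<in> S - isolated_singletons V E \<Longrightarrow> prime (p C)"
  unfolding coding_candidate_def bij_betw_def using prime_of_first_primes by blast

lemma coding_candidate_inj_on:
  "coding_candidate V E S p \<Longrightarrow> inj_on p (S - isolated_singletons V E)"
  unfolding coding_candidate_def bij_betw_def by blast

lemma coding_candidate_exists:
  assumes "finite V" "total_clique_covering V E S" "finite S" "card S = theta_t V E"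
  shows "\<exists>p. coding_candidate V E S p"
proof -
  let ?P = "first_primes (theta_t V E - card (isolated_vertices V E))"
  have "card (S - isolated_singletons V E) = card ?P"
    using card_Diff_isolated_singletons[OF assms(2,1)] assms(4) by (simp add: card_first_primes)
  then obtain p where "bij_betw p (S - isolated_singletons V E) ?P"
    using finite_same_card_bij assms(3) finite_first_primes by blast
  then show ?thesis
    unfolding coding_candidate_def using assms(2-4) by blast
qed

lemma coding_sequence_restrict:
  "coding_sequence V E S (restrict p (S - isolated_singletons V E)) = coding_sequence V E S p"
proof -
  have "vertex_label V E S (restrict p (S - isolated_singletons V E)) = vertex_label V E S p"
    unfolding vertex_label_def by (intro ext if_cong prod.cong) auto
  then show ?thesis
    by (simp add: coding_sequence_eq)
qed

lemma finite_coding_sequences: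
  assumes "finite (S - isolated_singletons V E)" "finite P"
  shows "finite {coding_sequence V E S p | p. bij_betw p (S - isolated_singletons V E) P}"
proof (rule finite_subset)
  let ?S' = "S - isolated_singletons V E"
  show "{coding_sequence V E S p | p. bij_betw p ?S' P} \<subseteq> coding_sequence V E S ` (?S' \<rightarrow>\<^sub>E P)"
  proof clarify
    fix p assume "bij_betw p ?S' P"
    then have "restrict p ?S' \<in> ?S' \<rightarrow>\<^sub>E P"
      by (auto simp: bij_betw_def)
    then show "coding_sequence V E S p \<in> coding_sequence V E S ` (?S' \<rightarrow>\<^sub>E P)"
      by (metis coding_sequence_restrict image_eqI)
  qed
  show "finite (coding_sequence V E S ` (?S' \<rightarrow>\<^sub>E P))"
    using assms by (simp add: finite_PiE)
qed

lemma finite_coding_candidate_sequences: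
  assumes "finite S"
  shows "finite {coding_sequence V E S p | p.
    bij_betw p (S - isolated_singletons V E) (first_primes (theta_t V E - card (isolated_vertices V E)))}"
  using assms by (intro finite_coding_sequences) (simp_all add: finite_first_primes)

lemma sigma_cover_le:
  assumes "coding_candidate V E S p"
  shows "sigma_cover V E S \<le> coding_sequence V E S p"
  unfolding sigma_cover_def Let_def
  using assms finite_coding_candidate_sequences unfolding coding_candidate_def
  by (intro Min_le) blast+

lemma sigma_cover_attained:
  assumes "coding_candidate V E S p"
  obtains q where "coding_candidate V E S q" "sigma_cover V E S = coding_sequence V E S q"
proof -
  let ?A = "{coding_sequence V E S p | p.
    bij_betw p (S - isolated_singletons V E) (first_primes (theta_t V E - card (isolated_vertices V E)))}"
  have "finite ?A" "?A \<noteq> {}"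
    using assms finite_coding_candidate_sequences unfolding coding_candidate_def by blast+
  then have "sigma_cover V E S \<in> ?A"
    unfolding sigma_cover_def Let_def by (rule Min_in)
  then show ?thesis
    using that assms unfolding coding_candidate_def by blast
qed

lemma finite_sigma_covers:
  assumes "finite V"
  shows "finite {sigma_cover V E S | S. total_clique_covering V E S \<and> finite S \<and> card S = theta_t V E}"
proof -
  have "{sigma_cover V E S | S. total_clique_covering V E S \<and> finite S \<and> card S = theta_t V E} =
        sigma_cover V E ` {S. total_clique_covering V E S \<and> finite S \<and> card S = theta_t V E}"
    by blast
  then show ?thesis
    using finite_total_clique_coverings[OF assms] by simp
qed

lemma sigma_code_le:
  assumes "finite V" "coding_candidate V E S p"
  shows "sigma_code V E \<le> coding_sequence V E S p"
proof -
  have "sigma_code V E \<le> sigma_cover V E S"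
    unfolding sigma_code_def
    using assms finite_sigma_covers unfolding coding_candidate_def by (intro Min_le) blast+
  also have "\<dots> \<le> coding_sequence V E S p"
    using assms(2) by (rule sigma_cover_le)
  finally show ?thesis .
qed

lemma sigma_code_attained:
  assumes "simple_graph V E"
  obtains S p where "coding_candidate V E S p" "sigma_code V E = coding_sequence V E S p"
proof -
  let ?A = "{sigma_cover V E S | S. total_clique_covering V E S \<and> finite S \<and> card S = theta_t V E}"
  have "finite V"
    using assms unfolding simple_graph_def by blast
  have "finite ?A" "?A \<noteq> {}"
    using finite_sigma_covers[OF \<open>finite V\<close>] minimum_total_clique_covering_exists[OF assms] by blast+
  then have "sigma_code V E \<in> ?A"
    unfolding sigma_code_def by (rule Min_in)
  then obtain S where S: "total_clique_covering V E S" "finite S" "card S = theta_t V E"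
      and code: "sigma_code V E = sigma_cover V E S"
    by blast
  obtain p where "coding_candidate V E S p"
    using coding_candidate_exists[OF \<open>finite V\<close> S] by blast
  then show ?thesis
    using sigma_cover_attained that code by metis
qed

lemma coding_candidate_edge_iff:
  assumes "simple_graph V E" "coding_candidate V E S p"
  shows "(u, v) \<in> E \<longleftrightarrow> u \<noteq> v \<and> \<not> coprime (vertex_label V E S p u) (vertex_label V E S p v)"
proof -
  have E: "sym E" "irrefl E"
    using assms(1) unfolding simple_graph_def by blast+
  have S: "total_clique_covering V E S" "finite S"
    using assms(2) unfolding coding_candidate_def by blast+
  show ?thesis
    by (rule edge_iff_not_coprime_vertex_labels[OF E S coding_candidate_inj_on[OF assms(2)]])
      (rule coding_candidate_prime[OF assms(2)])
qed

lemma graph_iso_if_coding_sequence_eq: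
  assumes G1: "simple_graph V1 E1" and G2: "simple_graph V2 E2"
    and c1: "coding_candidate V1 E1 S1 p1" and c2: "coding_candidate V2 E2 S2 p2"
    and eq: "coding_sequence V1 E1 S1 p1 = coding_sequence V2 E2 S2 p2"
  shows "graph_iso V1 E1 V2 E2"
proof -
  let ?l1 = "vertex_label V1 E1 S1 p1" and ?l2 = "vertex_label V2 E2 S2 p2"
  have fin: "finite V1" "finite V2"
    using G1 G2 unfolding simple_graph_def by blast+
  have "image_mset ?l1 (mset_set V1) = image_mset ?l2 (mset_set V2)"
    using arg_cong[OF eq, of mset] by (simp add: coding_sequence_eq)
  then obtain h where h: "bij_betw h V1 V2" and lab: "\<And>x. x \<in> V1 \<Longrightarrow> ?l2 (h x) = ?l1 x"
    using bij_betw_of_image_mset_eq[OF fin] by blast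
  note edge1 = coding_candidate_edge_iff[OF G1 c1] and edge2 = coding_candidate_edge_iff[OF G2 c2]
  have "(x, y) \<in> E1 \<longleftrightarrow> (h x, h y) \<in> E2" if "x \<in> V1" "y \<in> V1" for x y
  proof -
    have "x \<noteq> y \<longleftrightarrow> h x \<noteq> h y"
      using h that unfolding bij_betw_def inj_on_def by blast
    then show ?thesis
      unfolding edge1 edge2 lab[OF that(1)] lab[OF that(2)] by blast
  qed
  then show ?thesis
    unfolding graph_iso_def using h by blast
qed

definition graph_isomorphism ::
  "('a \<Rightarrow> 'b) \<Rightarrow> 'a set \<Rightarrow> ('a \<times> 'a) set \<Rightarrow> 'b set \<Rightarrow> ('b \<times> 'b) set \<Rightarrow> bool" where
  "graph_isomorphism f V1 E1 V2 E2 \<longleftrightarrow>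
     bij_betw f V1 V2 \<and> (\<forall>x\<in>V1. \<forall>y\<in>V1. (x, y) \<in> E1 \<longleftrightarrow> (f x, f y) \<in> E2)"

lemma graph_iso_iff_graph_isomorphism:
  "graph_iso V1 E1 V2 E2 \<longleftrightarrow> (\<exists>f. graph_isomorphism f V1 E1 V2 E2)"
  unfolding graph_iso_def graph_isomorphism_def ..

lemma graph_isomorphismD:
  assumes "graph_isomorphism f V1 E1 V2 E2"
  shows "bij_betw f V1 V2"
    and "x \<in> V1 \<Longrightarrow> y \<in> V1 \<Longrightarrow> (x, y) \<in> E1 \<longleftrightarrow> (f x, f y) \<in> E2"
    and "x \<in> V1 \<Longrightarrow> f x \<in> V2"
    and "w \<in> V2 \<Longrightarrow> \<exists>v\<in>V1. w = f v"
  using assms unfolding graph_isomorphism_def bij_betw_def by auto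

lemma graph_isomorphism_inv_into:
  assumes "graph_isomorphism f V1 E1 V2 E2"
  shows "graph_isomorphism (inv_into V1 f) V2 E2 V1 E1"
proof -
  note bij = graph_isomorphismD(1)[OF assms]
  have "(x, y) \<in> E2 \<longleftrightarrow> (inv_into V1 f x, inv_into V1 f y) \<in> E1" if "x \<in> V2" "y \<in> V2" for x y
  proof -
    have "inv_into V1 f x \<in> V1" "inv_into V1 f y \<in> V1"
      using bij that by (simp_all add: bij_betw_def inv_into_into)
    moreover have "f (inv_into V1 f x) = x" "f (inv_into V1 f y) = y"
      using bij that by (simp_all add: bij_betw_def f_inv_into_f)
    ultimately show ?thesis
      using graph_isomorphismD(2)[OF assms] by metis
  qed
  then show ?thesis
    unfolding graph_isomorphism_def using bij_betw_inv_into[OF bij] by blast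
qed

lemma is_clique_image:
  assumes "graph_isomorphism f V1 E1 V2 E2" "is_clique V1 E1 C"
  shows "is_clique V2 E2 (f ` C)"
proof -
  have C: "C \<subseteq> V1" "\<And>x y. x \<in> C \<Longrightarrow> y \<in> C \<Longrightarrow> x \<noteq> y \<Longrightarrow> (x, y) \<in> E1"
    using assms(2) unfolding is_clique_def by blast+
  have "(f x, f y) \<in> E2" if "x \<in> C" "y \<in> C" "f x \<noteq> f y" for x y
    using C that graph_isomorphismD(2)[OF assms(1)] by blast
  moreover have "f ` C \<subseteq> V2"
    using C(1) graph_isomorphismD(3)[OF assms(1)] by blast
  ultimately show ?thesis
    unfolding is_clique_def by blast
qed

lemma total_clique_covering_image:
  assumes iso: "graph_isomorphism f V1 E1 V2 E2" and E2: "E2 \<subseteq> V2 \<times> V2"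
    and cov: "total_clique_covering V1 E1 S"
  shows "total_clique_covering V2 E2 ((`) f ` S)"
  unfolding total_clique_covering_def
proof (intro conjI ballI)
  show "is_clique V2 E2 C'" if "C' \<in> (`) f ` S" for C'
    using that is_clique_image[OF iso] total_clique_coveringD(1)[OF cov] by blast
  show "\<exists>C'\<in>(`) f ` S. w \<in> C'" if "w \<in> V2" for w
  proof -
    obtain v where "v \<in> V1" "w = f v"
      using graph_isomorphismD(4)[OF iso \<open>w \<in> V2\<close>] by blast
    moreover obtain C where "C \<in> S" "v \<in> C"
      using total_clique_coveringD(2)[OF cov \<open>v \<in> V1\<close>] by blast
    ultimately show ?thesis
      by blast
  qed
  show "case e of (x', y') \<Rightarrow> \<exists>C'\<in>(`) f ` S. x' \<in> C' \<and> y' \<in> C'" if "e \<in> E2" for e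
  proof (cases e)
    case (Pair x' y')
    then have "x' \<in> V2" "y' \<in> V2"
      using E2 \<open>e \<in> E2\<close> by blast+
    then obtain x y where xy: "x \<in> V1" "y \<in> V1" "x' = f x" "y' = f y"
      using graph_isomorphismD(4)[OF iso] by metis
    then have "(x, y) \<in> E1"
      using graph_isomorphismD(2)[OF iso] \<open>e \<in> E2\<close> Pair by blast
    then obtain C where "C \<in> S" "x \<in> C" "y \<in> C"
      using total_clique_coveringD(3)[OF cov] by blast
    then show ?thesis
      using xy Pair by blast
  qed
qed

lemma isolated_image_iff:
  assumes iso: "graph_isomorphism f V1 E1 V2 E2"
    and E1: "E1 \<subseteq> V1 \<times> V1" and E2: "E2 \<subseteq> V2 \<times> V2" and v: "v \<in> V1"
  shows "isolated V2 E2 (f v) \<longleftrightarrow> isolated V1 E1 v"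
proof -
  have "(\<exists>w. (f v, w) \<in> E2) \<longleftrightarrow> (\<exists>u. (v, u) \<in> E1)"
  proof
    assume "\<exists>w. (f v, w) \<in> E2"
    then obtain w where w: "(f v, w) \<in> E2"
      by blast
    then have "w \<in> V2"
      using E2 by blast
    then obtain u where "u \<in> V1" "w = f u"
      using graph_isomorphismD(4)[OF iso] by blast
    then show "\<exists>u. (v, u) \<in> E1"
      using w graph_isomorphismD(2)[OF iso v] by blast
  next
    assume "\<exists>u. (v, u) \<in> E1"
    then obtain u where u: "(v, u) \<in> E1"
      by blast
    then have "u \<in> V1"
      using E1 by blast
    then show "\<exists>w. (f v, w) \<in> E2"
      using u graph_isomorphismD(2)[OF iso v] by blast
  qed
  then show ?thesis
    unfolding isolated_def using v graph_isomorphismD(3)[OF iso v] by blast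
qed

lemma isolated_vertices_image:
  assumes iso: "graph_isomorphism f V1 E1 V2 E2"
    and E1: "E1 \<subseteq> V1 \<times> V1" and E2: "E2 \<subseteq> V2 \<times> V2"
  shows "isolated_vertices V2 E2 = f ` isolated_vertices V1 E1"
proof -
  note bij = graph_isomorphismD(1)[OF iso]
  have "isolated_vertices V2 E2 = {w \<in> V2. isolated V2 E2 w}"
    unfolding isolated_vertices_def isolated_def by blast
  also have "\<dots> = f ` {v \<in> V1. isolated V2 E2 (f v)}"
    using bij unfolding bij_betw_def by blast
  also have "\<dots> = f ` isolated_vertices V1 E1"
    using isolated_image_iff[OF assms] unfolding isolated_vertices_def isolated_def by blast
  finally show ?thesis .
qed

lemma card_isolated_vertices_image:
  assumes iso: "graph_isomorphism f V1 E1 V2 E2"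
    and E1: "E1 \<subseteq> V1 \<times> V1" and E2: "E2 \<subseteq> V2 \<times> V2"
  shows "card (isolated_vertices V2 E2) = card (isolated_vertices V1 E1)"
proof -
  have "inj_on f (isolated_vertices V1 E1)"
    using graph_isomorphismD(1)[OF iso]
    by (rule bij_betw_imp_inj_on[THEN inj_on_subset]) (auto simp: isolated_vertices_def isolated_def)
  then show ?thesis
    unfolding isolated_vertices_image[OF assms] by (rule card_image)
qed

lemma theta_t_image_le:
  assumes "simple_graph V1 E1" "graph_isomorphism f V1 E1 V2 E2" "E2 \<subseteq> V2 \<times> V2"
  shows "theta_t V2 E2 \<le> theta_t V1 E1"
proof -
  obtain S where S: "total_clique_covering V1 E1 S" "finite S" "card S = theta_t V1 E1"
    using minimum_total_clique_covering_exists[OF assms(1)] by blast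
  have "theta_t V2 E2 \<le> card ((`) f ` S)"
    using total_clique_covering_image[OF assms(2,3) S(1)] S(2) by (simp add: theta_t_le_card)
  also have "\<dots> \<le> card S"
    using S(2) by (rule card_image_le)
  finally show ?thesis
    using S(3) by simp
qed

lemma theta_t_image:
  assumes "simple_graph V1 E1" "simple_graph V2 E2" "graph_isomorphism f V1 E1 V2 E2"
  shows "theta_t V2 E2 = theta_t V1 E1"
proof -
  have "E1 \<subseteq> V1 \<times> V1" "E2 \<subseteq> V2 \<times> V2"
    using assms(1,2) unfolding simple_graph_def by blast+
  then show ?thesis
    using theta_t_image_le[OF assms(1,3)]
      theta_t_image_le[OF assms(2) graph_isomorphism_inv_into[OF assms(3)]] by simp
qed

lemma image_Diff_isolated_singletons:
  assumes iso: "graph_isomorphism f V1 E1 V2 E2"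
    and E1: "E1 \<subseteq> V1 \<times> V1" and E2: "E2 \<subseteq> V2 \<times> V2" and S: "S \<subseteq> Pow V1"
  shows "(`) f ` S - isolated_singletons V2 E2 = (`) f ` (S - isolated_singletons V1 E1)"
proof -
  have inj: "inj_on ((`) f) (Pow V1)"
    using graph_isomorphismD(1)[OF iso] by (simp add: bij_betw_def inj_on_image_Pow)
  have "isolated_singletons V2 E2 = (`) f ` isolated_singletons V1 E1"
    unfolding isolated_vertices_image[OF assms(1-3)] by (simp add: image_image)
  moreover have "isolated_singletons V1 E1 \<subseteq> Pow V1"
    unfolding isolated_vertices_def isolated_def by blast
  moreover have "S - isolated_singletons V1 E1 \<subseteq> Pow V1"
    using S by blast
  ultimately show ?thesis
    using inj_on_image_set_diff[OF inj, of S "isolated_singletons V1 E1"] by simp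
qed

lemma coding_sequence_image:
  assumes iso: "graph_isomorphism f V1 E1 V2 E2"
    and E1: "E1 \<subseteq> V1 \<times> V1" and E2: "E2 \<subseteq> V2 \<times> V2" and S: "S \<subseteq> Pow V1"
    and q: "\<And>C. C \<in> S - isolated_singletons V1 E1 \<Longrightarrow> q (f ` C) = p C"
  shows "coding_sequence V2 E2 ((`) f ` S) q = coding_sequence V1 E1 S p"
proof -
  let ?S1 = "S - isolated_singletons V1 E1" and ?S2 = "(`) f ` S - isolated_singletons V2 E2"
  note bij = graph_isomorphismD(1)[OF iso]
  have label: "vertex_label V2 E2 ((`) f ` S) q (f v) = vertex_label V1 E1 S p v" if v: "v \<in> V1" for v
  proof -
    have inj: "inj_on ((`) f) {C \<in> ?S1. v \<in> C}"
      using bij S by (auto simp: bij_betw_def intro: inj_on_subset[OF inj_on_image_Pow])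
    have "f v \<in> f ` C \<longleftrightarrow> v \<in> C" if "C \<in> ?S1" for C
      using bij S v that by (auto simp: bij_betw_def inj_on_def)
    then have "{C \<in> ?S2. f v \<in> C} = (`) f ` {C \<in> ?S1. v \<in> C}"
      unfolding image_Diff_isolated_singletons[OF iso E1 E2 S] by blast
    then have "(\<Prod>C\<in>{C \<in> ?S2. f v \<in> C}. q C) = (\<Prod>C\<in>{C \<in> ?S1. v \<in> C}. q (f ` C))"
      using prod.reindex[OF inj, of q] by (simp only: comp_def)
    also have "\<dots> = (\<Prod>C\<in>{C \<in> ?S1. v \<in> C}. p C)"
      using q by (intro prod.cong) simp_all
    finally show ?thesis
      unfolding vertex_label_def using isolated_image_iff[OF iso E1 E2 v] by simp
  qed
  have "mset_set V2 = image_mset f (mset_set V1)"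
    using bij by (simp add: bij_betw_def image_mset_mset_set)
  then have "image_mset (vertex_label V2 E2 ((`) f ` S) q) (mset_set V2) =
             image_mset (vertex_label V2 E2 ((`) f ` S) q \<circ> f) (mset_set V1)"
    by (simp add: multiset.map_comp)
  also have "\<dots> = image_mset (vertex_label V1 E1 S p) (mset_set V1)"
    using label by (intro image_mset_cong) (cases "finite V1"; simp)
  finally show ?thesis
    by (simp add: coding_sequence_eq)
qed

lemma coding_candidate_image:
  assumes G1: "simple_graph V1 E1" and G2: "simple_graph V2 E2"
    and iso: "graph_isomorphism f V1 E1 V2 E2" and c: "coding_candidate V1 E1 S p"
  obtains q where "coding_candidate V2 E2 ((`) f ` S) q"
    and "coding_sequence V2 E2 ((`) f ` S) q = coding_sequence V1 E1 S p"
proof -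
  let ?S1 = "S - isolated_singletons V1 E1"
  let ?k1 = "theta_t V1 E1 - card (isolated_vertices V1 E1)"
  define q where "q = p \<circ> inv_into ?S1 ((`) f)"
  have E1: "E1 \<subseteq> V1 \<times> V1" and E2: "E2 \<subseteq> V2 \<times> V2"
    using G1 G2 unfolding simple_graph_def by blast+
  have cov: "total_clique_covering V1 E1 S" and S: "finite S" "card S = theta_t V1 E1"
    and p: "bij_betw p ?S1 (first_primes ?k1)"
    using c unfolding coding_candidate_def by blast+
  have SP: "S \<subseteq> Pow V1"
    using cov by (rule total_clique_covering_subset_Pow)
  have inj_f: "inj_on f V1"
    using graph_isomorphismD(1)[OF iso] by (simp add: bij_betw_def)
  have inj_S: "inj_on ((`) f) S"
    using inj_on_subset[OF inj_on_image_Pow[OF inj_f] SP] .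
  then have inj_S1: "inj_on ((`) f) ?S1"
    by (rule inj_on_subset) blast
  have "theta_t V2 E2 = theta_t V1 E1"
    using theta_t_image[OF G1 G2 iso] .
  moreover have "card (isolated_vertices V2 E2) = card (isolated_vertices V1 E1)"
    using card_isolated_vertices_image[OF iso E1 E2] .
  moreover have "card ((`) f ` S) = card S"
    using inj_S by (rule card_image)
  moreover have "bij_betw q ((`) f ` S - isolated_singletons V2 E2) (first_primes ?k1)"
    unfolding q_def image_Diff_isolated_singletons[OF iso E1 E2 SP]
    using bij_betw_trans[OF bij_betw_inv_into[OF inj_on_imp_bij_betw[OF inj_S1]] p] .
  ultimately have "coding_candidate V2 E2 ((`) f ` S) q"
    unfolding coding_candidate_def
    using total_clique_covering_image[OF iso E2 cov] S by simp
  moreover have "coding_sequence V2 E2 ((`) f ` S) q = coding_sequence V1 E1 S p"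
    using inj_S1 unfolding q_def by (intro coding_sequence_image[OF iso E1 E2 SP]) simp
  ultimately show ?thesis
    using that by blast
qed

lemma sigma_code_image_le:
  assumes G1: "simple_graph V1 E1" and G2: "simple_graph V2 E2"
    and iso: "graph_isomorphism f V1 E1 V2 E2"
  shows "sigma_code V2 E2 \<le> sigma_code V1 E1"
proof -
  obtain S p where c: "coding_candidate V1 E1 S p" and code: "sigma_code V1 E1 = coding_sequence V1 E1 S p"
    using sigma_code_attained[OF G1] by blast
  obtain q where "coding_candidate V2 E2 ((`) f ` S) q"
      and "coding_sequence V2 E2 ((`) f ` S) q = coding_sequence V1 E1 S p"
    using coding_candidate_image[OF G1 G2 iso c] by blast
  moreover have "finite V2"
    using G2 unfolding simple_graph_def by blast
  ultimately show ?thesis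
    using sigma_code_le code by metis
qed

theorem theorem3:
  fixes V1 :: "'a set" and E1 :: "('a \<times> 'a) set"
    and V2 :: "'b set" and E2 :: "('b \<times> 'b) set"
  assumes "simple_graph V1 E1" and "simple_graph V2 E2"
  shows "graph_iso V1 E1 V2 E2 \<longleftrightarrow> sigma_code V1 E1 = sigma_code V2 E2"
proof
  assume "graph_iso V1 E1 V2 E2"
  then obtain f where iso: "graph_isomorphism f V1 E1 V2 E2"
    unfolding graph_iso_iff_graph_isomorphism by blast
  show "sigma_code V1 E1 = sigma_code V2 E2"
    using sigma_code_image_le[OF assms iso]
      sigma_code_image_le[OF assms(2,1) graph_isomorphism_inv_into[OF iso]] by simp
next
  assume eq: "sigma_code V1 E1 = sigma_code V2 E2"
  obtain S1 p1 where c1: "coding_candidate V1 E1 S1 p1" "sigma_code V1 E1 = coding_sequence V1 E1 S1 p1"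
    using sigma_code_attained[OF assms(1)] by blast
  obtain S2 p2 where c2: "coding_candidate V2 E2 S2 p2" "sigma_code V2 E2 = coding_sequence V2 E2 S2 p2"
    using sigma_code_attained[OF assms(2)] by blast
  show "graph_iso V1 E1 V2 E2"
    using graph_iso_if_coding_sequence_eq[OF assms c1(1) c2(1)] eq c1(2) c2(2) by simp
qed

end
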